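(* Let $t\in\mathbb{Z}_+$ and $\alpha\in(0,1)$. Let $\mathcal{Q}_1,\dots,\mathcal{Q}_t$ be probability distributions on $\mathbb{R}$ with continuous CDFs $F_1,\dots,F_t$. Let $\mathcal{D}_1,\dots,\mathcal{D}_t$ be independent datasets, where $\mathcal{D}_j=\{u_{j,i}\}_{i=1}^{B_j}$ consists of $B_j\ge 1$ i.i.d. samples from $\mathcal{Q}_j$. Fix $k\in\{1,\dots,t\}$ and $\delta\in(0,1)$. Then with probability at least $1-\delta$, $$\big|F_t(\widehat{q}_{t,k})-(1-\alpha)\big|\le \phi(t,k)+\psi(t,k,\delta).$$
   Context: For a CDF $F$ and $\gamma\in(0,1)$, the left $\gamma$-quantile is $\mathsf{Q}^-_\gamma(F)=\inf\{x\in\mathbb{R}:F(x)\ge\gamma\}$. Let $B_{t,k}=\sum_{j=t-k+1}^t B_j$, and let $\widehat{F}_{t,k}(x)=\frac{1}{B_{t,k}}\sum_{j=t-k+1}^t\sum_{i=1}^{B_j}\mathbf{1}\{x\ge u_{j,i}\}$ be the empirical CDF of the data in the last $k$ periods. Define $\widehat{q}_{t,k}=\mathsf{Q}^-_{1-\alpha}(\widehat{F}_{t,k})$, $\phi(t,k)=\max_{t-k+1\le j\le t}\|F_j-F_t\|_\infty$, and $\psi(t,k,\delta)=\frac{5}{4}\sqrt{\frac{2\alpha(1-\alpha)\log(2/\delta)}{B_{t,k}}}+\frac{4\log(2/\delta)}{B_{t,k}}$. *)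

theory Defs
  imports "HOL-Probability.Probability"
begin

definition left_quantile :: "real \<Rightarrow> (real \<Rightarrow> real) \<Rightarrow> real" where
  "left_quantile \<gamma> F = Inf {x. F x \<ge> \<gamma>}"

definition Btk :: "(nat \<Rightarrow> nat) \<Rightarrow> nat \<Rightarrow> nat \<Rightarrow> nat" where
  "Btk B t k = (\<Sum>j\<in>{t-k+1..t}. B j)"

definition emp_cdf :: "(nat \<Rightarrow> nat) \<Rightarrow> (nat \<Rightarrow> nat \<Rightarrow> real) \<Rightarrow> nat \<Rightarrow> nat \<Rightarrow> real \<Rightarrow> real" where
  "emp_cdf B v t k x =
     (\<Sum>j\<in>{t-k+1..t}. \<Sum>i\<in>{1..B j}. (if x \<ge> v j i then 1 else 0)) / real (Btk B t k)"

definition qhat :: "real \<Rightarrow> (nat \<Rightarrow> nat) \<Rightarrow> (nat \<Rightarrow> nat \<Rightarrow> real) \<Rightarrow> nat \<Rightarrow> nat \<Rightarrow> real" where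
  "qhat \<alpha> B v t k = left_quantile (1 - \<alpha>) (emp_cdf B v t k)"

definition sup_dist :: "(real \<Rightarrow> real) \<Rightarrow> (real \<Rightarrow> real) \<Rightarrow> real" where
  "sup_dist F G = (SUP x. \<bar>F x - G x\<bar>)"

definition phi :: "(nat \<Rightarrow> real \<Rightarrow> real) \<Rightarrow> nat \<Rightarrow> nat \<Rightarrow> real" where
  "phi F t k = Max ((\<lambda>j. sup_dist (F j) (F t)) ` {t-k+1..t})"

definition psi :: "real \<Rightarrow> (nat \<Rightarrow> nat) \<Rightarrow> nat \<Rightarrow> nat \<Rightarrow> real \<Rightarrow> real" where
  "psi \<alpha> B t k \<delta> =
     5/4 * sqrt (2 * \<alpha> * (1 - \<alpha>) * ln (2/\<delta>) / real (Btk B t k))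
     + 4 * ln (2/\<delta>) / real (Btk B t k)"

end

theory Submission
  imports Defs "HOL-Probability.Probability"
begin

(* Pool the N = B_{t,k} samples of the last k periods. Their empirical CDF has mean
   G = (1/N) * sum of the CDFs F_j of the individual samples, and G is within phi(t,k) of F_t
   pointwise. With c = 1 - alpha, if G(qhat) > c + eps then at the point x where the continuous
   G equals c + eps the empirical CDF is below c = G(x) - eps; symmetrically for G(qhat) < c - eps.
   Each such deviation of a sum of independent indicators is controlled by Bernstein's inequality
   with variance proxy alpha(1 - alpha) + eps, and psi is the radius making each tail at most
   delta/2. *)

lemma left_quantile_le_iff:
  fixes F :: "real \<Rightarrow> real"
  assumes mono: "mono F" and right_cont: "\<And>x. continuous (at_right x) F"
    and attained: "c \<le> F a" and bdd: "bdd_below {x. c \<le> F x}"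
  shows "left_quantile c F \<le> y \<longleftrightarrow> c \<le> F y"
proof -
  define m where "m = left_quantile c F"
  have m_Inf: "m = Inf {x. c \<le> F x}" by (simp add: m_def left_quantile_def)
  have "c \<le> F m"
  proof (rule tendsto_lowerbound)
    show "(F \<longlongrightarrow> F m) (at_right m)" using right_cont by (simp add: continuous_within)
    show "\<forall>\<^sub>F x in at_right m. c \<le> F x"
      using eventually_at_right_less
    proof (rule eventually_mono)
      fix x assume "m < x"
      then obtain s where "c \<le> F s" "s < x"
        using cInf_lessD[of "{x. c \<le> F x}"] attained by (auto simp: m_Inf)
      moreover have "F s \<le> F x" using mono \<open>s < x\<close> by (simp add: monoD)
      ultimately show "c \<le> F x" by simp
    qed
  qed (rule trivial_limit_at_right_real)
  show ?thesis
  proof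
    assume "left_quantile c F \<le> y"
    then have "F m \<le> F y" using mono by (simp add: m_def monoD)
    with \<open>c \<le> F m\<close> show "c \<le> F y" by simp
  next
    assume "c \<le> F y"
    then show "left_quantile c F \<le> y"
      unfolding left_quantile_def using bdd by (simp add: cInf_lower)
  qed
qed

lemma continuous_at_right_step:
  "continuous (at_right x) (\<lambda>y::real. if a \<le> y then 1 else 0 :: real)"
  unfolding continuous_within
proof (rule tendsto_eventually)
  show "\<forall>\<^sub>F y in at_right x. (if a \<le> y then 1 else 0 :: real) = (if a \<le> x then 1 else 0)"
  proof (cases "a \<le> x")
    case True
    show ?thesis using eventually_at_right_less by eventually_elim (use True in auto)
  next
    case False
    show ?thesis by (rule eventually_at_rightI[of x a]) (use False in auto)
  qed
qed

lemma continuous_attains_between_limits: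
  fixes g :: "real \<Rightarrow> real"
  assumes "continuous_on UNIV g" "(g \<longlongrightarrow> a) at_bot" "(g \<longlongrightarrow> b) at_top" "a < y" "y < b"
  shows "\<exists>x. g x = y"
proof -
  obtain l where l: "\<And>x. x \<le> l \<Longrightarrow> g x < y"
    using order_tendstoD(2)[OF assms(2,4)] by (auto simp: eventually_at_bot_linorder)
  obtain r where r: "\<And>x. r \<le> x \<Longrightarrow> y < g x"
    using order_tendstoD(1)[OF assms(3,5)] by (auto simp: eventually_at_top_linorder)
  have "g (min l r) \<le> y" "y \<le> g (max l r)" using l[of "min l r"] r[of "max l r"] by auto
  moreover have "continuous_on {min l r..max l r} g"
    using assms(1) by (rule continuous_on_subset) auto
  moreover have "min l r \<le> max l r" by simp
  ultimately show ?thesis using IVT'[of g "min l r" y "max l r"] by blast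
qed

lemma mult_one_minus_le_shift:
  fixes c y \<epsilon> :: real
  assumes "0 \<le> c" "c \<le> 1" "0 \<le> y" "y \<le> 1" "\<bar>y - c\<bar> \<le> \<epsilon>"
  shows "y * (1 - y) \<le> c * (1 - c) + \<epsilon>"
proof -
  have "y * (1 - y) - c * (1 - c) = (y - c) * (1 - y - c)"
    by (simp add: algebra_simps)
  also have "\<dots> \<le> \<bar>y - c\<bar> * \<bar>1 - y - c\<bar>"
    by (metis abs_ge_self abs_mult)
  also have "\<dots> \<le> \<epsilon> * 1"
    using assms by (intro mult_mono) auto
  finally show ?thesis by simp
qed

lemma exp_le_one_plus_quadratic:
  fixes z :: real
  assumes "z \<le> 2/3"
  shows "exp z \<le> 1 + z + 3/4 * z^2"
proof -
  obtain t where t: "\<bar>t\<bar> \<le> \<bar>z\<bar>"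
    and taylor: "exp z = (\<Sum>m<3. z ^ m / fact m) + exp t / fact 3 * z ^ 3"
    using Maclaurin_exp_le[of z 3] by blast
  have quadratic: "(\<Sum>m<3. z ^ m / fact m) = 1 + z + z^2/2"
    by (simp add: eval_nat_numeral fact_numeral)
  have "exp t / fact 3 * z ^ 3 \<le> z^2/4"
  proof (cases "z \<ge> 0")
    case True
    have "exp t \<le> exp (2/3)" using t assms True by simp
    also have "exp (2/3::real) \<le> 1 + 2/3 + (2/3)^2" by (rule exp_bound) auto
    finally have "exp t \<le> 19/9" by (simp add: power2_eq_square)
    have "exp t / fact 3 * z ^ 3 = (exp t * z) * z^2 / 6"
      by (simp add: fact_numeral power2_eq_square power3_eq_cube)
    also have "\<dots> \<le> (19/9 * (2/3)) * z^2 / 6"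
      using \<open>exp t \<le> 19/9\<close> True assms
      by (intro divide_right_mono mult_right_mono mult_mono) auto
    also have "\<dots> \<le> z^2/4" by simp
    finally show ?thesis .
  next
    case False
    then have "z ^ 3 \<le> 0"
      using mult_nonneg_nonpos[of "z^2" z] by (simp add: power2_eq_square power3_eq_cube)
    then have "exp t / fact 3 * z ^ 3 \<le> 0"
      by (intro mult_nonneg_nonpos) auto
    also have "0 \<le> z^2/4" by simp
    finally show ?thesis .
  qed
  then show ?thesis using taylor quadratic by linarith
qed

lemma (in prob_space) integrable_exp_mult_bounded:
  fixes X :: "'a \<Rightarrow> real"
  assumes [measurable]: "X \<in> borel_measurable M"
    and bounded: "\<And>\<omega>. \<omega> \<in> space M \<Longrightarrow> \<bar>X \<omega>\<bar> \<le> 1" and "0 \<le> l"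
  shows "integrable M (\<lambda>\<omega>. exp (l * X \<omega>))"
proof (rule integrable_const_bound[where B="exp l"])
  show "AE \<omega> in M. norm (exp (l * X \<omega>)) \<le> exp l"
    using bounded \<open>0 \<le> l\<close> by (auto intro!: AE_I2 simp: abs_le_iff mult_left_le)
qed measurable

lemma (in prob_space) mgf_le_exp_variance:
  fixes X :: "'a \<Rightarrow> real"
  assumes [measurable]: "X \<in> borel_measurable M"
    and bounded: "\<And>\<omega>. \<omega> \<in> space M \<Longrightarrow> \<bar>X \<omega>\<bar> \<le> 1"
    and mean: "expectation X = 0" and "0 \<le> l" "l \<le> 2/3"
  shows "expectation (\<lambda>\<omega>. exp (l * X \<omega>)) \<le> exp (3/4 * l^2 * expectation (\<lambda>\<omega>. (X \<omega>)^2))"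
proof -
  have int_X: "integrable M X"
    by (rule integrable_const_bound[where B=1]) (use bounded in auto)
  have int_X2: "integrable M (\<lambda>\<omega>. (X \<omega>)^2)"
    by (rule integrable_const_bound[where B=1]) (use bounded in \<open>auto simp: abs_square_le_1\<close>)
  have taylor: "exp (l * X \<omega>) \<le> 1 + l * X \<omega> + 3/4 * l^2 * (X \<omega>)^2" if "\<omega> \<in> space M" for \<omega>
  proof -
    have "l * X \<omega> \<le> l * 1"
      using bounded[OF that] \<open>0 \<le> l\<close> by (intro mult_left_mono) auto
    with \<open>l \<le> 2/3\<close> have "l * X \<omega> \<le> 2/3" by simp
    from exp_le_one_plus_quadratic[OF this] show ?thesis
      by (simp add: power_mult_distrib)
  qed
  have "expectation (\<lambda>\<omega>. exp (l * X \<omega>))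
      \<le> expectation (\<lambda>\<omega>. 1 + l * X \<omega> + 3/4 * l^2 * (X \<omega>)^2)"
    using integrable_exp_mult_bounded[OF _ bounded \<open>0 \<le> l\<close>] int_X int_X2 taylor
    by (intro integral_mono) auto
  also have "\<dots> = 1 + 3/4 * l^2 * expectation (\<lambda>\<omega>. (X \<omega>)^2)"
    using int_X int_X2 mean prob_space by simp
  also have "\<dots> \<le> exp (3/4 * l^2 * expectation (\<lambda>\<omega>. (X \<omega>)^2))"
    by (rule exp_ge_add_one_self_aux) (simp add: add.commute exp_ge_add_one_self)
  finally show ?thesis .
qed

lemma (in prob_space) indep_sum_chernoff_bound:
  fixes Y :: "'i \<Rightarrow> 'a \<Rightarrow> real"
  assumes fin: "finite I" and indep: "indep_vars (\<lambda>_. borel) Y I"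
    and bounded: "\<And>i \<omega>. i \<in> I \<Longrightarrow> \<omega> \<in> space M \<Longrightarrow> \<bar>Y i \<omega>\<bar> \<le> 1"
    and mean: "\<And>i. i \<in> I \<Longrightarrow> expectation (Y i) = 0"
    and "0 \<le> l" "l \<le> 2/3"
  shows "prob {\<omega> \<in> space M. s \<le> (\<Sum>i\<in>I. Y i \<omega>)}
    \<le> exp (- l * s + 3/4 * l^2 * (\<Sum>i\<in>I. expectation (\<lambda>\<omega>. (Y i \<omega>)^2)))"
proof -
  have [measurable]: "Y i \<in> borel_measurable M" if "i \<in> I" for i
    using indep that by (auto simp: indep_vars_def)
  have int_E: "integrable M (\<lambda>\<omega>. exp (l * Y i \<omega>))" if "i \<in> I" for i
    using bounded that \<open>0 \<le> l\<close> by (intro integrable_exp_mult_bounded) auto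
  have indep_E: "indep_vars (\<lambda>_. borel) (\<lambda>i \<omega>. exp (l * Y i \<omega>)) I"
    by (rule indep_vars_compose2[OF indep]) measurable
  have exp_of_sum: "exp (l * (\<Sum>i\<in>I. Y i \<omega>)) = (\<Prod>i\<in>I. exp (l * Y i \<omega>))" for \<omega>
    by (simp add: sum_distrib_left exp_sum fin)
  have "prob {\<omega> \<in> space M. s \<le> (\<Sum>i\<in>I. Y i \<omega>)}
      \<le> prob {\<omega> \<in> space M. exp (l * s) \<le> exp (l * (\<Sum>i\<in>I. Y i \<omega>))}"
    by (rule finite_measure_mono) (auto intro: mult_left_mono \<open>0 \<le> l\<close>)
  also have "\<dots> \<le> expectation (\<lambda>\<omega>. exp (l * (\<Sum>i\<in>I. Y i \<omega>))) / exp (l * s)"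
    unfolding exp_of_sum using indep_vars_integrable[OF fin indep_E int_E]
    by (intro integral_Markov_inequality_measure[where A = "{\<omega> \<in> space M. exp (l * s) \<le> (\<Prod>i\<in>I. exp (l * Y i \<omega>))}"])
      (auto intro!: AE_I2 prod_nonneg)
  also have "expectation (\<lambda>\<omega>. exp (l * (\<Sum>i\<in>I. Y i \<omega>))) = (\<Prod>i\<in>I. expectation (\<lambda>\<omega>. exp (l * Y i \<omega>)))"
    unfolding exp_of_sum by (rule indep_vars_lebesgue_integral[OF fin indep_E int_E])
  also have "\<dots> \<le> (\<Prod>i\<in>I. exp (3/4 * l^2 * expectation (\<lambda>\<omega>. (Y i \<omega>)^2)))"
    using bounded mean \<open>0 \<le> l\<close> \<open>l \<le> 2/3\<close>
    by (intro prod_mono conjI integral_nonneg_AE mgf_le_exp_variance) auto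
  also have "\<dots> = exp (3/4 * l^2 * (\<Sum>i\<in>I. expectation (\<lambda>\<omega>. (Y i \<omega>)^2)))"
    by (simp add: exp_sum fin sum_distrib_left)
  also have "\<dots> / exp (l * s) = exp (- l * s + 3/4 * l^2 * (\<Sum>i\<in>I. expectation (\<lambda>\<omega>. (Y i \<omega>)^2)))"
    by (simp add: exp_diff[symmetric])
  finally show ?thesis by (simp add: divide_right_mono)
qed

lemma (in prob_space) indep_sum_bernstein_tail:
  fixes Y :: "'i \<Rightarrow> 'a \<Rightarrow> real"
  assumes "finite I" "indep_vars (\<lambda>_. borel) Y I"
    and "\<And>i \<omega>. i \<in> I \<Longrightarrow> \<omega> \<in> space M \<Longrightarrow> \<bar>Y i \<omega>\<bar> \<le> 1"
    and "\<And>i. i \<in> I \<Longrightarrow> expectation (Y i) = 0"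
    and variance: "(\<Sum>i\<in>I. expectation (\<lambda>\<omega>. (Y i \<omega>)^2)) \<le> S" and "0 < s" "s \<le> S"
  shows "prob {\<omega> \<in> space M. s \<le> (\<Sum>i\<in>I. Y i \<omega>)} \<le> exp (- (s^2 / (3 * S)))"
proof -
  define l where "l = 2 * s / (3 * S)"
  have "0 \<le> l" "l \<le> 2/3" using \<open>0 < s\<close> \<open>s \<le> S\<close> by (auto simp: l_def field_simps)
  then have "prob {\<omega> \<in> space M. s \<le> (\<Sum>i\<in>I. Y i \<omega>)}
      \<le> exp (- l * s + 3/4 * l^2 * (\<Sum>i\<in>I. expectation (\<lambda>\<omega>. (Y i \<omega>)^2)))"
    by (intro indep_sum_chernoff_bound[OF assms(1-4)])
  also have "\<dots> \<le> exp (- l * s + 3/4 * l^2 * S)"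
    using variance by (simp add: mult_left_mono)
  also have "- l * s + 3/4 * l^2 * S = - (s^2 / (3 * S))"
    using \<open>0 < s\<close> \<open>s \<le> S\<close> by (simp add: l_def field_simps power2_eq_square)
  finally show ?thesis .
qed

lemma sum_variance_le_variance_of_mean:
  fixes p :: "'i \<Rightarrow> real"
  assumes "finite I"
  shows "(\<Sum>i\<in>I. p i * (1 - p i))
    \<le> card I * ((\<Sum>i\<in>I. p i) / card I * (1 - (\<Sum>i\<in>I. p i) / card I))"
proof (cases "I = {}")
  case False
  then have n: "real (card I) > 0" using assms by (simp add: card_gt_0_iff)
  have "(\<Sum>i\<in>I. p i)^2 / card I \<le> (\<Sum>i\<in>I. (p i)^2)"
    using sum_squared_le_sum_of_squares[of p I] n by (simp add: field_simps)
  then show ?thesis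
    using n by (simp add: sum_subtractf algebra_simps power2_eq_square field_simps)
qed simp

locale pooled_sample = prob_space M for M :: "'a measure" +
  fixes I :: "'i set" and U :: "'i \<Rightarrow> 'a \<Rightarrow> real" and Q :: "'i \<Rightarrow> real measure"
  assumes finite_I: "finite I" and I_nonempty: "I \<noteq> {}"
    and indep_U: "indep_vars (\<lambda>_. borel) U I"
    and distr_U: "\<And>p. p \<in> I \<Longrightarrow> distr M borel (U p) = Q p"
    and real_distribution_Q: "\<And>p. p \<in> I \<Longrightarrow> real_distribution (Q p)"
    and continuous_cdf_Q: "\<And>p. p \<in> I \<Longrightarrow> continuous_on UNIV (cdf (Q p))"
begin

definition sample_cdf :: "'a \<Rightarrow> real \<Rightarrow> real" where
  "sample_cdf \<omega> x = (\<Sum>p\<in>I. if U p \<omega> \<le> x then 1 else 0) / card I"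

definition mixture_cdf :: "real \<Rightarrow> real" where
  "mixture_cdf x = (\<Sum>p\<in>I. cdf (Q p) x) / card I"

definition sample_quantile :: "real \<Rightarrow> 'a \<Rightarrow> real" where
  "sample_quantile c \<omega> = left_quantile c (sample_cdf \<omega>)"

lemma card_I_pos: "card I > 0"
  using finite_I I_nonempty by (simp add: card_gt_0_iff)

lemma measurable_U [measurable]: "p \<in> I \<Longrightarrow> U p \<in> borel_measurable M"
  using indep_U by (auto simp: indep_vars_def)

lemma measurable_sample_cdf [measurable]: "(\<lambda>\<omega>. sample_cdf \<omega> x) \<in> borel_measurable M"
  unfolding sample_cdf_def by measurable

lemma cdf_Q_bounds: "p \<in> I \<Longrightarrow> 0 \<le> cdf (Q p) x \<and> cdf (Q p) x \<le> 1"
  using real_distribution_Q by (simp add: real_distribution.cdf_bounded_prob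
      finite_borel_measure.cdf_nonneg real_distribution.finite_borel_measure_M)

lemma integrable_indicator_le:
  "p \<in> I \<Longrightarrow> integrable M (\<lambda>\<omega>. if U p \<omega> \<le> x then 1 else 0 :: real)"
  by (rule integrable_const_bound[where B=1]) auto

lemma expectation_indicator_le:
  assumes "p \<in> I"
  shows "expectation (\<lambda>\<omega>. if U p \<omega> \<le> x then 1 else 0) = cdf (Q p) x"
proof -
  have "expectation (\<lambda>\<omega>. if U p \<omega> \<le> x then 1 else 0)
      = expectation (indicator (U p -` {..x} \<inter> space M))"
    by (rule Bochner_Integration.integral_cong) (auto simp: indicator_def)
  also have "\<dots> = measure (distr M borel (U p)) {..x}"
    using assms by (simp add: measure_distr Int_absorb2)
  finally show ?thesis by (simp add: distr_U[OF assms] cdf_def)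
qed

lemma expectation_centred_indicator_le_sq:
  assumes "p \<in> I"
  shows "expectation (\<lambda>\<omega>. ((if U p \<omega> \<le> x then 1 else 0) - cdf (Q p) x)^2)
    = cdf (Q p) x * (1 - cdf (Q p) x)"
proof -
  let ?F = "cdf (Q p) x"
  have "expectation (\<lambda>\<omega>. ((if U p \<omega> \<le> x then 1 else 0) - ?F)^2)
      = expectation (\<lambda>\<omega>. (1 - 2 * ?F) * (if U p \<omega> \<le> x then 1 else 0) + ?F^2)"
    by (intro Bochner_Integration.integral_cong) (auto simp: power2_eq_square algebra_simps)
  also have "\<dots> = (1 - 2 * ?F) * ?F + ?F^2"
    using expectation_indicator_le[OF assms] integrable_indicator_le[OF assms]
    by (simp add: prob_space)
  finally show ?thesis by (simp add: algebra_simps power2_eq_square)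
qed

lemma sample_cdf_deviation_tail:
  fixes \<epsilon> V :: real
  assumes "\<sigma> = 1 \<or> \<sigma> = -1" and "0 < \<epsilon>" "\<epsilon> \<le> V"
    and variance: "mixture_cdf x * (1 - mixture_cdf x) \<le> V"
  shows "prob {\<omega> \<in> space M. \<epsilon> \<le> \<sigma> * (sample_cdf \<omega> x - mixture_cdf x)}
    \<le> exp (- (card I * \<epsilon>^2 / (3 * V)))"
proof -
  define Y where "Y p \<omega> = \<sigma> * ((if U p \<omega> \<le> x then 1 else 0) - cdf (Q p) x)" for p \<omega>
  have indep_Y: "indep_vars (\<lambda>_. borel) Y I"
    unfolding Y_def by (rule indep_vars_compose2[OF indep_U]) measurable
  have bounded_Y: "\<bar>Y p \<omega>\<bar> \<le> 1" if "p \<in> I" for p \<omega>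
    using cdf_Q_bounds[OF that, of x] assms(1) by (auto simp: Y_def)
  have mean_Y: "expectation (Y p) = 0" if "p \<in> I" for p
    using expectation_indicator_le[OF that] integrable_indicator_le[OF that]
    by (simp add: Y_def[abs_def] prob_space)
  have "(\<Sum>p\<in>I. expectation (\<lambda>\<omega>. (Y p \<omega>)^2)) = (\<Sum>p\<in>I. cdf (Q p) x * (1 - cdf (Q p) x))"
    using assms(1) by (auto simp: Y_def power_mult_distrib expectation_centred_indicator_le_sq)
  also have "\<dots> \<le> card I * (mixture_cdf x * (1 - mixture_cdf x))"
    using sum_variance_le_variance_of_mean[OF finite_I] by (simp add: mixture_cdf_def)
  also have "\<dots> \<le> card I * V"
    using variance by (simp add: mult_left_mono)
  finally have variance_Y: "(\<Sum>p\<in>I. expectation (\<lambda>\<omega>. (Y p \<omega>)^2)) \<le> card I * V" .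
  have "(\<Sum>p\<in>I. Y p \<omega>) = card I * (\<sigma> * (sample_cdf \<omega> x - mixture_cdf x))" for \<omega>
    using card_I_pos by (simp add: Y_def sample_cdf_def mixture_cdf_def sum_subtractf
        sum_distrib_left[symmetric] algebra_simps)
  then have "prob {\<omega> \<in> space M. \<epsilon> \<le> \<sigma> * (sample_cdf \<omega> x - mixture_cdf x)}
      = prob {\<omega> \<in> space M. card I * \<epsilon> \<le> (\<Sum>p\<in>I. Y p \<omega>)}"
    using card_I_pos by simp
  also have "\<dots> \<le> exp (- ((card I * \<epsilon>)^2 / (3 * (card I * V))))"
    using card_I_pos \<open>0 < \<epsilon>\<close> \<open>\<epsilon> \<le> V\<close>
    by (intro indep_sum_bernstein_tail[OF finite_I indep_Y bounded_Y mean_Y variance_Y]) auto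
  also have "(card I * \<epsilon>)^2 / (3 * (card I * V)) = card I * \<epsilon>^2 / (3 * V)"
    using card_I_pos by (simp add: power2_eq_square)
  finally show ?thesis .
qed

lemma sample_quantile_le_iff:
  assumes "0 < c" "c \<le> 1"
  shows "sample_quantile c \<omega> \<le> y \<longleftrightarrow> c \<le> sample_cdf \<omega> y"
  unfolding sample_quantile_def
proof (rule left_quantile_le_iff)
  show "mono (sample_cdf \<omega>)"
    by (intro monoI) (auto simp: sample_cdf_def intro!: divide_right_mono sum_mono)
  show "continuous (at_right x) (sample_cdf \<omega>)" for x
    unfolding sample_cdf_def[abs_def] using card_I_pos
    by (intro continuous_divide continuous_sum continuous_at_right_step continuous_const) auto
  have "sample_cdf \<omega> (Max ((\<lambda>p. U p \<omega>) ` I)) = 1"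
    using finite_I I_nonempty card_I_pos by (simp add: sample_cdf_def)
  with assms show "c \<le> sample_cdf \<omega> (Max ((\<lambda>p. U p \<omega>) ` I))"
    by simp
  have "Min ((\<lambda>p. U p \<omega>) ` I) \<le> x" if "c \<le> sample_cdf \<omega> x" for x
  proof (rule ccontr)
    assume below: "\<not> Min ((\<lambda>p. U p \<omega>) ` I) \<le> x"
    have above: "x < U p \<omega>" if "p \<in> I" for p
    proof -
      have "Min ((\<lambda>p. U p \<omega>) ` I) \<le> U p \<omega>"
        using finite_I that by (auto intro: Min_le)
      with below show ?thesis by linarith
    qed
    then have "sample_cdf \<omega> x = 0"
      by (auto simp: sample_cdf_def intro!: sum.neutral dest: above)
    with that assms show False by simp
  qed
  then show "bdd_below {x. c \<le> sample_cdf \<omega> x}"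
    unfolding bdd_below_def by blast
qed

lemma measurable_sample_quantile:
  assumes "0 < c" "c \<le> 1"
  shows "sample_quantile c \<in> borel_measurable M"
proof (rule borel_measurableI_le)
  show "{\<omega> \<in> space M. sample_quantile c \<omega> \<le> y} \<in> sets M" for y
    using assms by (simp add: sample_quantile_le_iff)
qed

lemma mixture_cdf_mono: "x \<le> y \<Longrightarrow> mixture_cdf x \<le> mixture_cdf y"
  using real_distribution_Q
  by (auto simp: mixture_cdf_def intro!: divide_right_mono sum_mono
      finite_borel_measure.cdf_nondecreasing real_distribution.finite_borel_measure_M)

lemma mixture_cdf_nonneg: "0 \<le> mixture_cdf x"
  using cdf_Q_bounds by (auto simp: mixture_cdf_def intro!: divide_nonneg_nonneg sum_nonneg)

lemma mixture_cdf_le_1: "mixture_cdf x \<le> 1"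
proof -
  have "(\<Sum>p\<in>I. cdf (Q p) x) \<le> (\<Sum>p\<in>I. 1)"
    using cdf_Q_bounds by (intro sum_mono) blast
  then show ?thesis using card_I_pos by (simp add: mixture_cdf_def)
qed

lemma continuous_mixture_cdf: "continuous_on UNIV mixture_cdf"
  unfolding mixture_cdf_def[abs_def] using continuous_cdf_Q card_I_pos
  by (intro continuous_on_divide continuous_on_sum continuous_on_const) auto

lemma measurable_mixture_cdf [measurable]: "mixture_cdf \<in> borel_measurable borel"
  by (rule borel_measurable_continuous_onI[OF continuous_mixture_cdf])

lemma mixture_cdf_attains:
  assumes "0 < y" "y < 1"
  shows "\<exists>x. mixture_cdf x = y"
proof (rule continuous_attains_between_limits[OF continuous_mixture_cdf _ _ assms])
  have "((\<lambda>x. (\<Sum>p\<in>I. cdf (Q p) x) / card I) \<longlongrightarrow> (\<Sum>p\<in>I. 0) / card I) at_bot"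
    using real_distribution_Q card_I_pos
    by (intro tendsto_divide tendsto_sum tendsto_const)
      (auto intro: finite_borel_measure.cdf_lim_at_bot real_distribution.finite_borel_measure_M)
  then show "(mixture_cdf \<longlongrightarrow> 0) at_bot"
    by (simp add: mixture_cdf_def[abs_def])
  have "((\<lambda>x. (\<Sum>p\<in>I. cdf (Q p) x) / card I) \<longlongrightarrow> (\<Sum>p\<in>I. 1) / card I) at_top"
    using real_distribution_Q card_I_pos
    by (intro tendsto_divide tendsto_sum tendsto_const)
      (auto intro: real_distribution.cdf_lim_at_top_prob)
  then show "(mixture_cdf \<longlongrightarrow> 1) at_top"
    using card_I_pos by (simp add: mixture_cdf_def[abs_def])
qed

lemma mixture_cdf_sample_quantile_upper_tail:
  fixes \<epsilon> V :: real
  assumes "0 < c" "c \<le> 1" "0 < \<epsilon>" and variance: "c * (1 - c) + \<epsilon> \<le> V"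
  shows "prob {\<omega> \<in> space M. c + \<epsilon> < mixture_cdf (sample_quantile c \<omega>)}
    \<le> exp (- (card I * \<epsilon>^2 / (3 * V)))"
proof (cases "c + \<epsilon> < 1")
  case False
  then have "{\<omega> \<in> space M. c + \<epsilon> < mixture_cdf (sample_quantile c \<omega>)} = {}"
    by (auto simp: not_less intro: order.trans[OF mixture_cdf_le_1])
  then show ?thesis by (simp only: measure_empty exp_ge_zero)
next
  case True
  then obtain x where x: "mixture_cdf x = c + \<epsilon>"
    using mixture_cdf_attains[of "c + \<epsilon>"] assms by auto
  have "{\<omega> \<in> space M. c + \<epsilon> < mixture_cdf (sample_quantile c \<omega>)}
      \<subseteq> {\<omega> \<in> space M. \<epsilon> \<le> -1 * (sample_cdf \<omega> x - mixture_cdf x)}"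
  proof safe
    fix \<omega> assume "c + \<epsilon> < mixture_cdf (sample_quantile c \<omega>)"
    then have "\<not> sample_quantile c \<omega> \<le> x"
      using x mixture_cdf_mono[of "sample_quantile c \<omega>" x] by linarith
    then show "\<epsilon> \<le> -1 * (sample_cdf \<omega> x - mixture_cdf x)"
      using x sample_quantile_le_iff[OF \<open>0 < c\<close> \<open>c \<le> 1\<close>] by simp
  qed
  then have "prob {\<omega> \<in> space M. c + \<epsilon> < mixture_cdf (sample_quantile c \<omega>)}
      \<le> prob {\<omega> \<in> space M. \<epsilon> \<le> -1 * (sample_cdf \<omega> x - mixture_cdf x)}"
    by (rule finite_measure_mono) measurable
  also have "\<dots> \<le> exp (- (card I * \<epsilon>^2 / (3 * V)))"
  proof (rule sample_cdf_deviation_tail)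
    show "mixture_cdf x * (1 - mixture_cdf x) \<le> V"
      by (rule order.trans[OF mult_one_minus_le_shift variance])
        (use assms x mixture_cdf_nonneg[of x] mixture_cdf_le_1[of x] in auto)
    show "\<epsilon> \<le> V" using assms mult_nonneg_nonneg[of c "1 - c"] by linarith
  qed (use assms in auto)
  finally show ?thesis .
qed

lemma mixture_cdf_sample_quantile_lower_tail:
  fixes \<epsilon> V :: real
  assumes "0 < c" "c \<le> 1" "0 < \<epsilon>" and variance: "c * (1 - c) + \<epsilon> \<le> V"
  shows "prob {\<omega> \<in> space M. mixture_cdf (sample_quantile c \<omega>) < c - \<epsilon>}
    \<le> exp (- (card I * \<epsilon>^2 / (3 * V)))"
proof (cases "0 < c - \<epsilon>")
  case False
  then have "{\<omega> \<in> space M. mixture_cdf (sample_quantile c \<omega>) < c - \<epsilon>} = {}"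
    by (auto simp: not_less intro: order.trans[OF _ mixture_cdf_nonneg])
  then show ?thesis by (simp only: measure_empty exp_ge_zero)
next
  case True
  then obtain x where x: "mixture_cdf x = c - \<epsilon>"
    using mixture_cdf_attains[of "c - \<epsilon>"] assms by auto
  have "{\<omega> \<in> space M. mixture_cdf (sample_quantile c \<omega>) < c - \<epsilon>}
      \<subseteq> {\<omega> \<in> space M. \<epsilon> \<le> 1 * (sample_cdf \<omega> x - mixture_cdf x)}"
  proof safe
    fix \<omega> assume "mixture_cdf (sample_quantile c \<omega>) < c - \<epsilon>"
    then have "sample_quantile c \<omega> \<le> x"
      using x mixture_cdf_mono[of x "sample_quantile c \<omega>"] by linarith
    then show "\<epsilon> \<le> 1 * (sample_cdf \<omega> x - mixture_cdf x)"
      using x sample_quantile_le_iff[OF \<open>0 < c\<close> \<open>c \<le> 1\<close>] by simp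
  qed
  then have "prob {\<omega> \<in> space M. mixture_cdf (sample_quantile c \<omega>) < c - \<epsilon>}
      \<le> prob {\<omega> \<in> space M. \<epsilon> \<le> 1 * (sample_cdf \<omega> x - mixture_cdf x)}"
    by (rule finite_measure_mono) measurable
  also have "\<dots> \<le> exp (- (card I * \<epsilon>^2 / (3 * V)))"
  proof (rule sample_cdf_deviation_tail)
    show "mixture_cdf x * (1 - mixture_cdf x) \<le> V"
      by (rule order.trans[OF mult_one_minus_le_shift variance])
        (use assms x mixture_cdf_nonneg[of x] mixture_cdf_le_1[of x] in auto)
    show "\<epsilon> \<le> V" using assms mult_nonneg_nonneg[of c "1 - c"] by linarith
  qed (use assms in auto)
  finally show ?thesis .
qed

lemma mixture_cdf_sample_quantile_concentration:
  fixes \<epsilon> V :: real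
  assumes "0 < c" "c \<le> 1" "0 < \<epsilon>" "c * (1 - c) + \<epsilon> \<le> V"
  shows "1 - 2 * exp (- (card I * \<epsilon>^2 / (3 * V)))
    \<le> prob {\<omega> \<in> space M. \<bar>mixture_cdf (sample_quantile c \<omega>) - c\<bar> \<le> \<epsilon>}"
proof -
  define G where "G \<omega> = mixture_cdf (sample_quantile c \<omega>)" for \<omega>
  have [measurable]: "sample_quantile c \<in> borel_measurable M"
    by (rule measurable_sample_quantile[OF assms(1,2)])
  then have [measurable]: "G \<in> borel_measurable M"
    unfolding G_def by measurable
  have split: "space M - {\<omega> \<in> space M. \<bar>G \<omega> - c\<bar> \<le> \<epsilon>}
      = {\<omega> \<in> space M. c + \<epsilon> < G \<omega>} \<union> {\<omega> \<in> space M. G \<omega> < c - \<epsilon>}"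
    by auto
  have "{\<omega> \<in> space M. \<bar>G \<omega> - c\<bar> \<le> \<epsilon>} \<in> events"
    by measurable
  then have "1 - prob {\<omega> \<in> space M. \<bar>G \<omega> - c\<bar> \<le> \<epsilon>}
      = prob (space M - {\<omega> \<in> space M. \<bar>G \<omega> - c\<bar> \<le> \<epsilon>})"
    by (simp add: prob_compl)
  also have "\<dots> = prob ({\<omega> \<in> space M. c + \<epsilon> < G \<omega>} \<union> {\<omega> \<in> space M. G \<omega> < c - \<epsilon>})"
    by (simp only: split)
  also have "\<dots> \<le> prob {\<omega> \<in> space M. c + \<epsilon> < G \<omega>} + prob {\<omega> \<in> space M. G \<omega> < c - \<epsilon>}"
    by (rule measure_Un_le) measurable
  also have "\<dots> \<le> 2 * exp (- (card I * \<epsilon>^2 / (3 * V)))"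
    using mixture_cdf_sample_quantile_upper_tail[OF assms]
      mixture_cdf_sample_quantile_lower_tail[OF assms]
    by (simp add: G_def)
  finally show ?thesis by (simp add: G_def)
qed

lemma sample_quantile_concentration:
  fixes \<epsilon> V d :: real and H :: "real \<Rightarrow> real"
  assumes "0 < c" "c \<le> 1" "0 < \<epsilon>" "c * (1 - c) + \<epsilon> \<le> V"
    and "continuous_on UNIV H" and close: "\<And>x. \<bar>H x - mixture_cdf x\<bar> \<le> d"
  shows "1 - 2 * exp (- (card I * \<epsilon>^2 / (3 * V)))
    \<le> prob {\<omega> \<in> space M. \<bar>H (sample_quantile c \<omega>) - c\<bar> \<le> d + \<epsilon>}"
proof -
  have [measurable]: "sample_quantile c \<in> borel_measurable M"
    by (rule measurable_sample_quantile[OF assms(1,2)])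
  have [measurable]: "H \<in> borel_measurable borel"
    by (rule borel_measurable_continuous_onI[OF assms(5)])
  have "{\<omega> \<in> space M. \<bar>mixture_cdf (sample_quantile c \<omega>) - c\<bar> \<le> \<epsilon>}
      \<subseteq> {\<omega> \<in> space M. \<bar>H (sample_quantile c \<omega>) - c\<bar> \<le> d + \<epsilon>}"
  proof safe
    fix \<omega> assume "\<bar>mixture_cdf (sample_quantile c \<omega>) - c\<bar> \<le> \<epsilon>"
    with close[of "sample_quantile c \<omega>"] show "\<bar>H (sample_quantile c \<omega>) - c\<bar> \<le> d + \<epsilon>"
      by linarith
  qed
  then have "prob {\<omega> \<in> space M. \<bar>mixture_cdf (sample_quantile c \<omega>) - c\<bar> \<le> \<epsilon>}
      \<le> prob {\<omega> \<in> space M. \<bar>H (sample_quantile c \<omega>) - c\<bar> \<le> d + \<epsilon>}"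
    by (rule finite_measure_mono) measurable
  with mixture_cdf_sample_quantile_concentration[OF assms(1-4)] show ?thesis
    by linarith
qed

end

lemma bernstein_radius_bound:
  fixes v L n :: real
  assumes "0 \<le> v" "0 < L" "0 < n"
  defines "\<epsilon> \<equiv> 5/4 * sqrt (2 * v * L / n) + 4 * L / n"
  shows "3 * L * (v + \<epsilon>) \<le> n * \<epsilon>^2"
proof -
  define A where "A = 5/4 * sqrt (2 * v * L / n)"
  have "0 \<le> A" using assms by (simp add: A_def)
  have "(sqrt (2 * v * L / n))^2 = 2 * v * L / n"
    using assms by simp
  then have A2: "A^2 = 25/8 * v * L / n"
    unfolding A_def power_mult_distrib by (simp add: power2_eq_square)
  have eps: "\<epsilon> = A + 4 * L / n" by (simp add: \<epsilon>_def A_def)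
  have "\<epsilon>^2 = A * \<epsilon> + 4 * L / n * \<epsilon>"
    by (simp add: eps power2_eq_square algebra_simps)
  moreover have "A^2 \<le> A * \<epsilon>"
    unfolding eps power2_eq_square using \<open>0 \<le> A\<close> assms by (intro mult_left_mono) auto
  ultimately have "A^2 + 4 * L / n * \<epsilon> \<le> \<epsilon>^2" by linarith
  have "25/8 * v * L + 4 * L * \<epsilon> = n * (A^2 + 4 * L / n * \<epsilon>)"
    using A2 \<open>0 < n\<close> by (simp add: field_simps)
  also have "\<dots> \<le> n * \<epsilon>^2"
    using \<open>A^2 + 4 * L / n * \<epsilon> \<le> \<epsilon>^2\<close> \<open>0 < n\<close> by (intro mult_left_mono) auto
  finally have main: "25/8 * v * L + 4 * L * \<epsilon> \<le> n * \<epsilon>^2" .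
  have "0 \<le> \<epsilon>" using assms by (simp add: \<epsilon>_def)
  then have "0 \<le> v * L" "0 \<le> L * \<epsilon>"
    using assms by simp_all
  with main show ?thesis by (simp add: algebra_simps)
qed

lemma psi_pos:
  assumes "0 < \<alpha>" "\<alpha> < 1" "0 < \<delta>" "\<delta> < 1" "0 < Btk B t k"
  shows "0 < psi \<alpha> B t k \<delta>"
proof -
  have "0 \<le> 2 * \<alpha> * (1 - \<alpha>) * ln (2 / \<delta>) / real (Btk B t k)"
    using assms by simp
  moreover have "0 < 4 * ln (2 / \<delta>) / real (Btk B t k)"
    using assms by simp
  ultimately show ?thesis unfolding psi_def by (simp add: add_nonneg_pos)
qed

lemma bernstein_exponent_psi_le:
  assumes "0 < \<alpha>" "\<alpha> < 1" "0 < \<delta>" "\<delta> < 1" "0 < Btk B t k"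
  shows "2 * exp (- (Btk B t k * (psi \<alpha> B t k \<delta>)^2 / (3 * (\<alpha> * (1 - \<alpha>) + psi \<alpha> B t k \<delta>))))
    \<le> \<delta>"
proof -
  define L where "L = ln (2 / \<delta>)"
  define \<epsilon> where "\<epsilon> = psi \<alpha> B t k \<delta>"
  have "0 < L" using assms by (simp add: L_def)
  have "0 < \<epsilon>" using psi_pos assms by (simp add: \<epsilon>_def)
  have "0 \<le> \<alpha> * (1 - \<alpha>)" using assms by simp
  have "3 * L * (\<alpha> * (1 - \<alpha>) + \<epsilon>) \<le> Btk B t k * \<epsilon>^2"
    using bernstein_radius_bound[OF \<open>0 \<le> \<alpha> * (1 - \<alpha>)\<close> \<open>0 < L\<close>, of "Btk B t k"] assms
    by (simp add: \<epsilon>_def psi_def L_def mult.assoc)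
  then have "L \<le> Btk B t k * \<epsilon>^2 / (3 * (\<alpha> * (1 - \<alpha>) + \<epsilon>))"
    using \<open>0 < \<epsilon>\<close> \<open>0 \<le> \<alpha> * (1 - \<alpha>)\<close> by (simp add: field_simps)
  then have "exp (- (Btk B t k * \<epsilon>^2 / (3 * (\<alpha> * (1 - \<alpha>) + \<epsilon>)))) \<le> exp (- L)"
    by simp
  also have "exp (- L) = \<delta> / 2"
    using assms by (simp add: L_def exp_minus)
  finally show ?thesis by (simp add: \<epsilon>_def)
qed

lemma abs_diff_le_phi:
  assumes "j \<in> {t-k+1..t}" "bdd_above (range (\<lambda>x. \<bar>F j x - F t x\<bar>))"
  shows "\<bar>F j x - F t x\<bar> \<le> phi F t k"
proof -
  have "\<bar>F j x - F t x\<bar> \<le> sup_dist (F j) (F t)"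
    unfolding sup_dist_def using assms(2) by (rule cSUP_upper[OF UNIV_I])
  also have "\<dots> \<le> phi F t k"
    unfolding phi_def using assms(1) by (intro Max_ge) auto
  finally show ?thesis .
qed

lemma abs_average_diff_le:
  fixes f :: "'i \<Rightarrow> real"
  assumes "finite I" "I \<noteq> {}" "\<And>i. i \<in> I \<Longrightarrow> \<bar>f i - a\<bar> \<le> d"
  shows "\<bar>(\<Sum>i\<in>I. f i) / card I - a\<bar> \<le> d"
proof -
  have n: "0 < real (card I)" using assms by (simp add: card_gt_0_iff)
  have "\<bar>(\<Sum>i\<in>I. f i) / card I - a\<bar> = \<bar>\<Sum>i\<in>I. f i - a\<bar> / card I"
    using n by (simp add: sum_subtractf field_simps)
  also have "\<dots> \<le> (\<Sum>i\<in>I. \<bar>f i - a\<bar>) / card I"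
    by (intro divide_right_mono sum_abs) simp
  also have "\<dots> \<le> (\<Sum>i\<in>I. d) / card I"
    using assms(3) by (intro divide_right_mono sum_mono) auto
  finally show ?thesis using n by simp
qed

lemma abs_average_diff_le_phi:
  fixes F :: "nat \<Rightarrow> real \<Rightarrow> real" and B :: "nat \<Rightarrow> nat"
  assumes "(SIGMA j:{t-k+1..t}. {1..B j}) \<noteq> {}"
    and "\<And>j. j \<in> {t-k+1..t} \<Longrightarrow> bdd_above (range (\<lambda>x. \<bar>F j x - F t x\<bar>))"
  shows "\<bar>(\<Sum>p\<in>(SIGMA j:{t-k+1..t}. {1..B j}). F (fst p) x)
      / card (SIGMA j:{t-k+1..t}. {1..B j}) - F t x\<bar> \<le> phi F t k"
proof (rule abs_average_diff_le)
  show "finite (SIGMA j:{t-k+1..t}. {1..B j})" by simp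
qed (use assms in \<open>auto intro: abs_diff_le_phi\<close>)

lemma abs_cdf_diff_le_1:
  assumes "real_distribution P" "real_distribution P'"
  shows "\<bar>cdf P x - cdf P' x\<bar> \<le> 1"
proof -
  have "0 \<le> cdf P x" "cdf P x \<le> 1" "0 \<le> cdf P' x" "cdf P' x \<le> 1"
    using assms by (simp_all add: real_distribution.cdf_bounded_prob
        finite_borel_measure.cdf_nonneg real_distribution.finite_borel_measure_M)
  then show ?thesis by linarith
qed

lemma Btk_eq_card_Sigma: "Btk B t k = card (SIGMA j:{t-k+1..t}. {1..B j})"
  by (simp add: Btk_def card_SigmaI)

lemma emp_cdf_eq_sum_Sigma:
  "emp_cdf B v t k x
    = (\<Sum>(j, i)\<in>(SIGMA j:{t-k+1..t}. {1..B j}). if v j i \<le> x then 1 else 0)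
      / card (SIGMA j:{t-k+1..t}. {1..B j})"
  by (simp add: emp_cdf_def Btk_eq_card_Sigma sum.Sigma)

lemma pooled_sample_last_periods:
  fixes M :: "'a measure" and Q :: "nat \<Rightarrow> real measure" and B :: "nat \<Rightarrow> nat"
    and u :: "nat \<Rightarrow> nat \<Rightarrow> 'a \<Rightarrow> real" and t k :: nat
  assumes "prob_space M" "k \<in> {1..t}" "1 \<le> B t"
    and "\<And>j. j \<in> {1..t} \<Longrightarrow> real_distribution (Q j)"
    and "\<And>j. j \<in> {1..t} \<Longrightarrow> continuous_on UNIV (cdf (Q j))"
    and "prob_space.indep_vars M (\<lambda>_. borel) (\<lambda>(j, i). u j i)
           {(j, i). j \<in> {1..t} \<and> i \<in> {1..B j}}"
    and "\<And>j i. j \<in> {1..t} \<Longrightarrow> i \<in> {1..B j} \<Longrightarrow> distr M borel (u j i) = Q j"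
  shows "pooled_sample M (SIGMA j:{t-k+1..t}. {1..B j}) (\<lambda>(j, i). u j i) (\<lambda>p. Q (fst p))"
proof (intro pooled_sample.intro pooled_sample_axioms.intro)
  have last_periods: "(SIGMA j:{t-k+1..t}. {1..B j}) \<subseteq> {(j, i). j \<in> {1..t} \<and> i \<in> {1..B j}}"
    using assms(2) by auto
  show "finite (SIGMA j:{t-k+1..t}. {1..B j})" by simp
  have "(t, 1) \<in> (SIGMA j:{t-k+1..t}. {1..B j})"
    using assms(2,3) by auto
  then show "(SIGMA j:{t-k+1..t}. {1..B j}) \<noteq> {}"
    by blast
  show "prob_space.indep_vars M (\<lambda>_. borel) (\<lambda>(j, i). u j i) (SIGMA j:{t-k+1..t}. {1..B j})"
    by (rule prob_space.indep_vars_subset[OF assms(1,6) last_periods])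
  fix p assume "p \<in> (SIGMA j:{t-k+1..t}. {1..B j})"
  then obtain j i where p: "p = (j, i)" "j \<in> {1..t}" "i \<in> {1..B j}"
    using last_periods by blast
  show "distr M borel ((\<lambda>(j, i). u j i) p) = Q (fst p)"
    using assms(7) p by simp
  show "real_distribution (Q (fst p))"
    using assms(4) p by simp
  show "continuous_on UNIV (cdf (Q (fst p)))"
    using assms(5) p by simp
qed (rule assms(1))

theorem theorem1:
  fixes M :: "'a measure"
    and Q :: "nat \<Rightarrow> real measure"
    and B :: "nat \<Rightarrow> nat"
    and u :: "nat \<Rightarrow> nat \<Rightarrow> 'a \<Rightarrow> real"
    and t k :: nat and \<alpha> \<delta> :: real
  assumes "prob_space M"
    and "t \<ge> 1"
    and "0 < \<alpha>" "\<alpha> < 1"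
    and "\<And>j. j \<in> {1..t} \<Longrightarrow> real_distribution (Q j)"
    and "\<And>j. j \<in> {1..t} \<Longrightarrow> continuous_on UNIV (cdf (Q j))"
    and "\<And>j. j \<in> {1..t} \<Longrightarrow> B j \<ge> 1"
    and "prob_space.indep_vars M (\<lambda>_. borel) (\<lambda>(j, i). u j i)
           {(j, i). j \<in> {1..t} \<and> i \<in> {1..B j}}"
    and "\<And>j i. j \<in> {1..t} \<Longrightarrow> i \<in> {1..B j} \<Longrightarrow> distr M borel (u j i) = Q j"
    and "k \<in> {1..t}"
    and "0 < \<delta>" "\<delta> < 1"
  shows "measure M {\<omega> \<in> space M.
            \<bar>cdf (Q t) (qhat \<alpha> B (\<lambda>j i. u j i \<omega>) t k) - (1 - \<alpha>)\<bar>
              \<le> phi (\<lambda>j. cdf (Q j)) t k + psi \<alpha> B t k \<delta>} \<ge> 1 - \<delta>"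
proof -
  define I where "I = (SIGMA j:{t-k+1..t}. {1..B j})"
  have t: "t \<in> {1..t}" using assms(2) by simp
  interpret pooled_sample M I "\<lambda>(j, i). u j i" "\<lambda>p. Q (fst p)"
    unfolding I_def using assms(7)[OF t]
    by (intro pooled_sample_last_periods[OF assms(1,10)]) (use assms in auto)
  have "emp_cdf B (\<lambda>j i. u j i \<omega>) t k = sample_cdf \<omega>" for \<omega>
    unfolding sample_cdf_def[abs_def] emp_cdf_eq_sum_Sigma I_def[symmetric]
    by (simp add: case_prod_unfold)
  then have qhat_eq: "qhat \<alpha> B (\<lambda>j i. u j i \<omega>) t k = sample_quantile (1 - \<alpha>) \<omega>" for \<omega>
    unfolding qhat_def sample_quantile_def by simp
  have "\<bar>cdf (Q t) x - mixture_cdf x\<bar> \<le> phi (\<lambda>j. cdf (Q j)) t k" for x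
    unfolding mixture_cdf_def abs_minus_commute[of "cdf (Q t) x"] unfolding I_def
    using I_nonempty assms(5,10) t
    by (intro abs_average_diff_le_phi bdd_aboveI2[where M=1] abs_cdf_diff_le_1) (auto simp: I_def)
  then have "1 - 2 * exp (- (card I * (psi \<alpha> B t k \<delta>)^2 / (3 * (\<alpha> * (1 - \<alpha>) + psi \<alpha> B t k \<delta>))))
      \<le> prob {\<omega> \<in> space M. \<bar>cdf (Q t) (sample_quantile (1 - \<alpha>) \<omega>) - (1 - \<alpha>)\<bar>
        \<le> phi (\<lambda>j. cdf (Q j)) t k + psi \<alpha> B t k \<delta>}"
    using assms(3,4,6) t psi_pos[OF assms(3,4,11,12)] card_I_pos
    by (intro sample_quantile_concentration) (auto simp: I_def Btk_eq_card_Sigma algebra_simps)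
  moreover have "2 * exp (- (card I * (psi \<alpha> B t k \<delta>)^2 / (3 * (\<alpha> * (1 - \<alpha>) + psi \<alpha> B t k \<delta>))))
      \<le> \<delta>"
    using bernstein_exponent_psi_le[OF assms(3,4,11,12)] card_I_pos
    by (simp add: I_def Btk_eq_card_Sigma)
  ultimately show ?thesis by (simp add: qhat_eq)
qed

end
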